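(* Let $q \geq 5$ be a prime power and let $\mathcal{X}$ be a plane curve of degree $q-1$ defined over $\mathbb{F}_q$ without $\mathbb{F}_q$-linear components with $\mathrm{N}_q(\mathcal{X}) = (q-1)^2$. Let $i, j$ be (not necessarily distinct) non-negative integers and suppose $l_1, l_2$ are distinct lines defined over $\mathbb{F}_q$ with $\#(l_1 \cap \mathcal{X}(\mathbb{F}_q)) = i$ and $\#(l_2 \cap \mathcal{X}(\mathbb{F}_q)) = j$. If the point $P = l_1 \cap l_2$ lies in $\mathcal{X}(\mathbb{F}_q)$, then $i + j \geq q$.
   Context: $\mathcal{X}(\mathbb{F}_q)=\mathcal{X}\cap\mathbb{P}^2(\mathbb{F}_q)$, $\mathrm{N}_q(\mathcal{X})=\#\mathcal{X}(\mathbb{F}_q)$; "without $\mathbb{F}_q$-linear components" means no line defined over $\mathbb{F}_q$ is a component of $\mathcal{X}$. *)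

theory Defs
  imports "HOL-Computational_Algebra.Polynomial" "HOL-Library.Cardinality"
begin

text \<open>Trivariate polynomials F(X,Y,Z) over a ring, as iterated univariate polynomials:
  outermost variable Z, then Y, innermost X.\<close>
type_synonym 'a poly3 = "'a poly poly poly"

definition mcoeff :: "'a::zero poly3 \<Rightarrow> nat \<Rightarrow> nat \<Rightarrow> nat \<Rightarrow> 'a" where
  "mcoeff F a b c = coeff (coeff (coeff F c) b) a"

definition homogeneous3 :: "'a::zero poly3 \<Rightarrow> nat \<Rightarrow> bool" where
  "homogeneous3 F d \<longleftrightarrow> (\<forall>a b c. mcoeff F a b c \<noteq> 0 \<longrightarrow> a + b + c = d)"

definition eval3 :: "'a::comm_semiring_0 poly3 \<Rightarrow> 'a \<Rightarrow> 'a \<Rightarrow> 'a \<Rightarrow> 'a" where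
  "eval3 F x y z = poly (poly (poly F [:[:z:]:]) [:y:]) x"

text \<open>The linear form aX + bY + cZ.\<close>
definition linear_form :: "'a::comm_ring_1 \<Rightarrow> 'a \<Rightarrow> 'a \<Rightarrow> 'a poly3" where
  "linear_form a b c = [: [: [:0, a:], [:b:] :], [:[:c:]:] :]"

text \<open>Points of P^2(F_q), via normalized representatives (first nonzero coordinate is 1).\<close>
definition proj_points :: "('a::field \<times> 'a \<times> 'a) set" where
  "proj_points = {(x, y, z). x = 1 \<or> (x = 0 \<and> y = 1) \<or> (x = 0 \<and> y = 0 \<and> z = 1)}"

definition curve_points :: "'a::field poly3 \<Rightarrow> ('a \<times> 'a \<times> 'a) set" where
  "curve_points F = {(x, y, z) \<in> proj_points. eval3 F x y z = 0}"

definition line_points :: "'a::field \<Rightarrow> 'a \<Rightarrow> 'a \<Rightarrow> ('a \<times> 'a \<times> 'a) set" where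
  "line_points a b c = {(x, y, z) \<in> proj_points. a * x + b * y + c * z = 0}"

definition is_Fq_line :: "('a::field \<times> 'a \<times> 'a) set \<Rightarrow> bool" where
  "is_Fq_line l \<longleftrightarrow> (\<exists>a b c. (a, b, c) \<noteq> (0, 0, 0) \<and> l = line_points a b c)"

definition no_Fq_linear_component :: "'a::field poly3 \<Rightarrow> bool" where
  "no_Fq_linear_component F \<longleftrightarrow>
     (\<forall>a b c. (a, b, c) \<noteq> (0, 0, 0) \<longrightarrow> \<not> linear_form a b c dvd F)"

end

theory Submission
  imports Defs
begin

text \<open>Restricted to a line, a form of degree d becomes a binary form of degree d; if it has more
  than d zeros on the line it vanishes identically there, so the line is a component.
  Hence, when X has no F_q-linear component, every F_q-line meets X(F_q) in at most q - 1
  points. The q + 1 lines through P cover X(F_q), and each one other than l1, l2 carries at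
  most q - 2 points besides P, so (q - 1)^2 - 1 <= (i - 1) + (j - 1) + (q - 1)(q - 2),
  which is i + j >= q.\<close>

definition eval2 :: "'a::comm_semiring_1 poly poly \<Rightarrow> 'a \<Rightarrow> 'a \<Rightarrow> 'a" where
  "eval2 G x y = poly (poly G [:y:]) x"

definition homogeneous2 :: "'a::zero poly poly \<Rightarrow> nat \<Rightarrow> bool" where
  "homogeneous2 G n \<longleftrightarrow> (\<forall>a b. coeff (coeff G b) a \<noteq> 0 \<longrightarrow> a + b = n)"

definition linear_form2 :: "'a::comm_ring_1 \<Rightarrow> 'a \<Rightarrow> 'a poly poly" where
  "linear_form2 a b = [:[:0, a:], [:b:]:]"

definition proj_points1 :: "('a::field \<times> 'a) set" where
  "proj_points1 = {(x, y). x = 1 \<or> (x = 0 \<and> y = 1)}"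

lemma eval2_add [simp]: "eval2 (G + H) x y = eval2 G x y + eval2 H x y"
  by (simp add: eval2_def)

lemma eval2_mult [simp]: "eval2 (G * H) x y = eval2 G x y * eval2 H x y"
  by (simp add: eval2_def)

lemma eval2_power [simp]: "eval2 (G ^ k) x y = eval2 G x y ^ k"
  by (simp add: eval2_def poly_power)

lemma eval2_const [simp]: "eval2 [:[:z:]:] x y = z"
  by (simp add: eval2_def)

lemma eval2_sum: "eval2 (\<Sum>k\<in>A. f k) x y = (\<Sum>k\<in>A. eval2 (f k) x y)"
  by (simp add: eval2_def poly_sum)

lemma eval2_monom [simp]: "eval2 (monom (monom c m) b) x y = c * x ^ m * y ^ b"
  by (simp add: eval2_def poly_monom)

lemma eval2_linear_form2 [simp]: "eval2 (linear_form2 a b) x y = a * x + b * y"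
  by (simp add: eval2_def linear_form2_def algebra_simps)

lemma homogeneous2_coeff_eq_0: "homogeneous2 G n \<Longrightarrow> n < b \<Longrightarrow> coeff G b = 0"
  unfolding homogeneous2_def by (intro poly_eqI) force

lemma homogeneous2_coeff:
  assumes "homogeneous2 G n" "b \<le> n"
  shows "coeff G b = monom (coeff (coeff G b) (n - b)) (n - b)"
proof (rule poly_eqI)
  fix a
  show "coeff (coeff G b) a = coeff (monom (coeff (coeff G b) (n - b)) (n - b)) a"
    using assms unfolding homogeneous2_def
    by (cases "a = n - b") (auto simp: coeff_monom, metis add_diff_cancel_right')
qed

lemma homogeneous2_as_sum:
  assumes "homogeneous2 G n"
  shows "G = (\<Sum>b\<le>n. monom (monom (coeff (coeff G b) (n - b)) (n - b)) b)"
proof (rule poly_eqI)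
  fix b
  show "coeff G b = coeff (\<Sum>b\<le>n. monom (monom (coeff (coeff G b) (n - b)) (n - b)) b) b"
    using homogeneous2_coeff[OF assms] homogeneous2_coeff_eq_0[OF assms]
    by (cases "b \<le> n") (simp_all add: coeff_sum coeff_monom)
qed

lemma eval2_homogeneous2:
  assumes "homogeneous2 G n"
  shows "eval2 G x y = (\<Sum>b\<le>n. coeff (coeff G b) (n - b) * x ^ (n - b) * y ^ b)"
  by (subst homogeneous2_as_sum[OF assms]) (simp add: eval2_sum)

lemma eval2_homogeneous2_scale:
  assumes "homogeneous2 G n"
  shows "eval2 G (l * x) (l * y) = l ^ n * eval2 G x y"
proof -
  have "(l * x) ^ (n - b) * (l * y) ^ b = l ^ n * (x ^ (n - b) * y ^ b)" if "b \<le> n" for b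
  proof -
    from that have "l ^ n = l ^ (n - b) * l ^ b" by (simp flip: power_add)
    then show ?thesis by (simp add: power_mult_distrib algebra_simps)
  qed
  then show ?thesis
    by (simp add: eval2_homogeneous2[OF assms] sum_distrib_left mult.assoc mult.left_commute)
qed

lemma eval2_homogeneous2_0_left:
  assumes "homogeneous2 G n"
  shows "eval2 G 0 y = coeff (coeff G n) 0 * y ^ n"
proof -
  have "eval2 G 0 y = (\<Sum>b\<le>n. if b = n then coeff (coeff G b) 0 * y ^ b else 0)"
    unfolding eval2_homogeneous2[OF assms] by (intro sum.cong) (auto simp: power_0_left)
  then show ?thesis by simp
qed

lemma homogeneous2_eq_0:
  assumes "homogeneous2 G n" "\<And>b. b \<le> n \<Longrightarrow> coeff (coeff G b) (n - b) = 0"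
  shows "G = 0"
  using assms unfolding homogeneous2_def
  by (intro poly_eqI) (metis coeff_0 le_add2 add_diff_cancel_right')

lemma homogeneous2_sum:
  "(\<And>k. k \<in> A \<Longrightarrow> homogeneous2 (f k) n) \<Longrightarrow> homogeneous2 (\<Sum>k\<in>A. f k) n"
  unfolding homogeneous2_def coeff_sum by (metis (mono_tags, lifting) sum.neutral)

lemma homogeneous2_mult:
  fixes G H :: "'a::comm_semiring_1 poly poly"
  assumes "homogeneous2 G n" "homogeneous2 H m"
  shows "homogeneous2 (G * H) (n + m)"
  unfolding homogeneous2_def
proof (intro allI impI)
  fix a b
  assume "coeff (coeff (G * H) b) a \<noteq> 0"
  moreover have "coeff (coeff (G * H) b) a =
      (\<Sum>i\<le>b. \<Sum>j\<le>a. coeff (coeff G i) j * coeff (coeff H (b - i)) (a - j))"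
    by (simp add: coeff_mult coeff_sum)
  ultimately obtain i j where ij: "i \<le> b" "j \<le> a"
    "coeff (coeff G i) j \<noteq> 0" "coeff (coeff H (b - i)) (a - j) \<noteq> 0"
    by (metis (no_types, lifting) atMost_iff mult_not_zero sum.neutral)
  then have "j + i = n" "(a - j) + (b - i) = m"
    using assms unfolding homogeneous2_def by blast+
  with ij show "a + b = n + m" by linarith
qed

lemma homogeneous2_power:
  fixes G :: "'a::comm_semiring_1 poly poly"
  assumes "homogeneous2 G n"
  shows "homogeneous2 (G ^ k) (n * k)"
proof (induction k)
  case 0
  then show ?case by (simp add: homogeneous2_def coeff_1 split: if_splits)
next
  case (Suc k)
  then show ?case using homogeneous2_mult[OF assms Suc] by simp
qed

lemma homogeneous2_linear_form2: "homogeneous2 (linear_form2 a b) 1"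
  unfolding homogeneous2_def linear_form2_def by (auto simp: coeff_pCons split: nat.splits)

lemma poly_homogeneous2_linear:
  fixes G :: "'a::comm_ring_1 poly poly"
  assumes "homogeneous2 G n"
  shows "poly G [:0, c:] = monom (eval2 G 1 c) n"
proof -
  have "[:0, c:] = monom c 1" by (simp add: monom_Suc monom_0)
  then have "poly G [:0, c:] = (\<Sum>b\<le>n. monom (coeff (coeff G b) (n - b)) (n - b) * monom (c ^ b) b)"
    by (subst homogeneous2_as_sum[OF assms])
      (simp add: poly_sum poly_monom monom_power)
  also have "\<dots> = monom (eval2 G 1 c) n"
    by (simp add: eval2_homogeneous2[OF assms] mult_monom monom_sum)
  finally show ?thesis .
qed

lemma binary_form_coeffs_eq_0:
  fixes c :: "nat \<Rightarrow> 'a::field"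
  assumes S: "S \<subseteq> proj_points1" "n < card S"
    and zeros: "\<And>x y. (x, y) \<in> S \<Longrightarrow> (\<Sum>k\<le>n. c k * x ^ (n - k) * y ^ k) = 0"
    and "b \<le> n"
  shows "c b = 0"
proof (rule ccontr)
  assume "c b \<noteq> 0"
  define h where "h = (\<Sum>k\<le>n. monom (c k) k)"
  have coeff_h: "coeff h k = (if k \<le> n then c k else 0)" for k
    by (simp add: h_def coeff_sum coeff_monom)
  have "h \<noteq> 0"
    using \<open>c b \<noteq> 0\<close> \<open>b \<le> n\<close> coeff_h by (metis coeff_0)
  have "degree h \<le> n"
    by (rule degree_le) (simp add: coeff_h)
  define Y where "Y = {y. (1, y) \<in> S}"
  have roots: "Y \<subseteq> {y. poly h y = 0}"
    using zeros[of 1] by (auto simp: Y_def h_def poly_sum poly_monom)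
  have "finite Y"
    using finite_subset[OF roots poly_roots_finite[OF \<open>h \<noteq> 0\<close>]] .
  have card_Y: "card Y \<le> degree h"
    using card_mono[OF poly_roots_finite[OF \<open>h \<noteq> 0\<close>] roots] card_poly_roots_bound[OF \<open>h \<noteq> 0\<close>]
    by linarith
  have "S \<subseteq> Pair (1::'a) ` Y \<union> ({(0, 1)} \<inter> S)"
    using S(1) unfolding proj_points1_def Y_def by auto
  then have "card S \<le> card (Pair (1::'a) ` Y \<union> ({(0, 1)} \<inter> S))"
    using \<open>finite Y\<close> by (intro card_mono) auto
  also have "\<dots> \<le> card (Pair (1::'a) ` Y) + card ({(0, 1)} \<inter> S)"
    by (rule card_Un_le)
  also have "\<dots> \<le> card Y + card ({(0, 1)} \<inter> S)"
    using card_image_le[OF \<open>finite Y\<close>, of "Pair (1::'a)"] by simp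
  also have "\<dots> \<le> n"
  proof (cases "(0, 1) \<in> S")
    case True
    have "(\<Sum>k\<le>n. c k * 0 ^ (n - k) * 1 ^ k) = (\<Sum>k\<le>n. if k = n then c k else (0::'a))"
      by (intro sum.cong) (auto simp: power_0_left)
    then have "coeff h n = 0"
      using zeros[OF True] coeff_h by simp
    then have "degree h \<noteq> n"
      using \<open>h \<noteq> 0\<close> by (metis leading_coeff_0_iff)
    then have "degree h < n"
      using \<open>degree h \<le> n\<close> by simp
    with True card_Y show ?thesis by simp
  next
    case False
    with card_Y \<open>degree h \<le> n\<close> show ?thesis by simp
  qed
  finally show False using S(2) by simp
qed

lemma homogeneous3_coeff: "homogeneous3 F d \<Longrightarrow> homogeneous2 (coeff F k) (d - k)"
  unfolding homogeneous3_def homogeneous2_def mcoeff_def by force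

lemma homogeneous3_coeff_eq_0: "homogeneous3 F d \<Longrightarrow> d < k \<Longrightarrow> coeff F k = 0"
  unfolding homogeneous3_def mcoeff_def by (intro poly_eqI) force

lemma eval2_poly: "eval2 (poly F t) x y = eval3 F x y (eval2 t x y)"
  by (induction F) (simp_all add: eval3_def eval2_def)

lemma homogeneous2_poly:
  fixes F :: "'a::comm_ring_1 poly3"
  assumes "homogeneous3 F d" "homogeneous2 t 1"
  shows "homogeneous2 (poly F t) d"
proof -
  have "homogeneous2 (coeff F k * t ^ k) d" for k
  proof (cases "k \<le> d")
    case True
    have "homogeneous2 (coeff F k * t ^ k) (d - k + 1 * k)"
      by (intro homogeneous2_mult homogeneous2_power homogeneous3_coeff assms)
    with True show ?thesis by simp
  next
    case False
    then show ?thesis using homogeneous3_coeff_eq_0[OF assms(1)] by (simp add: homogeneous2_def)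
  qed
  then show ?thesis by (simp add: poly_altdef homogeneous2_sum)
qed

lemma eval3_eq_sum:
  assumes "degree F \<le> N"
  shows "eval3 F x y z = (\<Sum>k\<le>N. eval2 (coeff F k) x y * z ^ k)"
proof -
  have "poly F [:[:z:]:] = (\<Sum>k\<le>N. coeff F k * [:[:z:]:] ^ k)"
    by (subst poly_as_sum_of_monoms'[OF assms, symmetric]) (simp add: poly_sum poly_monom)
  then have "eval2 (poly F [:[:z:]:]) x y = (\<Sum>k\<le>N. eval2 (coeff F k) x y * z ^ k)"
    by (simp add: eval2_sum)
  then show ?thesis
    by (simp add: eval2_poly)
qed

lemma linear_form2_dvd_if_eval2_eq_0:
  fixes G :: "'a::field poly poly"
  assumes G: "homogeneous2 G n" "eval2 G x y = 0"
    and "(a, b) \<noteq> (0, 0)" "(x, y) \<noteq> (0, 0)" "a * x + b * y = 0"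
  shows "linear_form2 a b dvd G"
proof (cases "b = 0")
  case False
  have "x \<noteq> 0"
    using assms(4,5) False by auto
  have "y / x = - a / b"
    using assms(5) False \<open>x \<noteq> 0\<close> by (simp add: field_simps add_eq_0_iff2)
  have "eval2 G x y = x ^ n * eval2 G 1 (y / x)"
    using eval2_homogeneous2_scale[OF G(1), of x 1 "y / x"] \<open>x \<noteq> 0\<close> by simp
  then have "poly G [:0, - a / b:] = 0"
    using G \<open>x \<noteq> 0\<close> \<open>y / x = - a / b\<close> by (simp add: poly_homogeneous2_linear)
  then have "[:- [:0, - a / b:], 1:] dvd G"
    by (simp add: poly_eq_0_iff_dvd)
  moreover have "[:- [:0, - a / b:], 1:] = linear_form2 a b * [:[:1 / b:]:]"
    using False by (simp add: linear_form2_def)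
  ultimately show ?thesis
    using dvd_mult_left by metis
next
  case True
  then have "a \<noteq> 0" "x = 0" "y \<noteq> 0"
    using assms(3-5) by auto
  then have "coeff (coeff G n) 0 = 0"
    using G eval2_homogeneous2_0_left[OF G(1)] by simp
  then have "coeff (coeff G k) 0 = 0" for k
    using G(1) unfolding homogeneous2_def by (metis add_0)
  then have "[:0, 1:] dvd coeff G k" for k
    using poly_eq_0_iff_dvd[of "coeff G k" 0] by (simp add: poly_0_coeff_0)
  then have "[:[:0, 1:]:] dvd G"
    by (simp add: const_poly_dvd_iff)
  moreover have "[:[:0, 1:]:] = linear_form2 a b * [:[:1 / a:]:]"
    using True \<open>a \<noteq> 0\<close> by (simp add: linear_form2_def)
  ultimately show ?thesis
    using dvd_mult_left by metis
qed

lemma eval3_homogeneous3_scale_xy: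
  assumes "homogeneous3 F d"
  shows "eval3 F (l * x) (l * y) z = (\<Sum>k\<le>d. eval2 (coeff F k) x y * l ^ (d - k) * z ^ k)"
proof -
  have "degree F \<le> d"
    using homogeneous3_coeff_eq_0[OF assms] by (intro degree_le) auto
  then have "eval3 F (l * x) (l * y) z = (\<Sum>k\<le>d. eval2 (coeff F k) (l * x) (l * y) * z ^ k)"
    by (rule eval3_eq_sum)
  also have "\<dots> = (\<Sum>k\<le>d. eval2 (coeff F k) x y * l ^ (d - k) * z ^ k)"
    by (simp add: eval2_homogeneous2_scale[OF homogeneous3_coeff[OF assms]] ac_simps)
  finally show ?thesis .
qed

lemma linear_form_dvd_if_card_gt_degree_c_nonzero:
  fixes F :: "'a::field poly3"
  assumes F: "homogeneous3 F d" and "c \<noteq> 0"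
    and many: "d < card (line_points a b c \<inter> curve_points F)"
  shows "linear_form a b c dvd F"
proof -
  define t where "t = linear_form2 (- a / c) (- b / c)"
  \<comment> \<open>substituting Z = t(X, Y) restricts F to the line\<close>
  define R where "R = poly F t"
  have R: "homogeneous2 R d"
    unfolding R_def t_def by (intro homogeneous2_poly F homogeneous2_linear_form2)
  have third: "z = eval2 t x y" if "(x, y, z) \<in> line_points a b c" for x y z
  proof -
    have "c * z = - (a * x) - b * y"
      using that by (simp add: line_points_def algebra_simps eq_neg_iff_add_eq_0)
    then show ?thesis
      using \<open>c \<noteq> 0\<close> by (simp add: t_def field_simps)
  qed
  define S where "S = (\<lambda>(x, y, z). (x, y)) ` (line_points a b c \<inter> curve_points F)"
  have "inj_on (\<lambda>(x, y, z). (x, y)) (line_points a b c \<inter> curve_points F)"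
    by (rule inj_on_inverseI[where g = "\<lambda>(x, y). (x, y, eval2 t x y)"]) (auto dest: third)
  then have card_S: "d < card S"
    using many by (simp add: S_def card_image)
  have S: "S \<subseteq> proj_points1"
    using \<open>c \<noteq> 0\<close> by (auto simp: S_def line_points_def proj_points_def proj_points1_def)
  have zeros: "eval2 R x y = 0" if "(x, y) \<in> S" for x y
    using that third by (auto simp: S_def R_def eval2_poly curve_points_def)
  have "coeff (coeff R k) (d - k) = 0" if "k \<le> d" for k
    by (rule binary_form_coeffs_eq_0[OF S card_S _ that]) (simp add: zeros flip: eval2_homogeneous2[OF R])
  then have "R = 0"
    by (rule homogeneous2_eq_0[OF R])
  then have "[:- t, 1:] dvd F"
    by (simp add: R_def poly_eq_0_iff_dvd)
  moreover have "[:- t, 1:] = linear_form a b c * [:[:[:1 / c:]:]:]"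
    using \<open>c \<noteq> 0\<close> by (simp add: t_def linear_form_def linear_form2_def flip: one_pCons)
  ultimately show ?thesis
    using dvd_mult_left by metis
qed

lemma linear_form_dvd_if_card_gt_degree_c_zero:
  fixes F :: "'a::field poly3"
  assumes F: "homogeneous3 F d" and "(a, b) \<noteq> (0, 0)"
    and many: "d < card (line_points a b 0 \<inter> curve_points F)"
  shows "linear_form a b 0 dvd F"
proof -
  \<comment> \<open>the points of the line are (l x0 : l y0 : w) with (l : w) in P^1\<close>
  define x0 :: 'a where "x0 = (if b = 0 then 0 else 1)"
  define y0 where "y0 = (if b = 0 then 1 else - a / b)"
  define \<psi> :: "'a \<times> 'a \<times> 'a \<Rightarrow> 'a \<times> 'a"
    where "\<psi> = (\<lambda>(x, y, z). (if b = 0 then y else x, z))"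
  have param: "p = (case \<psi> p of (l, w) \<Rightarrow> (l * x0, l * y0, w))" if "p \<in> line_points a b 0" for p
    using that \<open>(a, b) \<noteq> (0, 0)\<close>
    by (cases p) (auto simp: line_points_def \<psi>_def x0_def y0_def field_simps add_eq_0_iff2)
  define S where "S = \<psi> ` (line_points a b 0 \<inter> curve_points F)"
  have "inj_on \<psi> (line_points a b 0 \<inter> curve_points F)"
    by (rule inj_on_inverseI[where g = "\<lambda>(l, w). (l * x0, l * y0, w)"]) (use param in auto)
  then have card_S: "d < card S"
    using many by (simp add: S_def card_image)
  have S: "S \<subseteq> proj_points1"
    using \<open>(a, b) \<noteq> (0, 0)\<close>
    by (auto simp: S_def \<psi>_def line_points_def proj_points_def proj_points1_def split: if_splits)
  have zeros: "(\<Sum>k\<le>d. eval2 (coeff F k) x0 y0 * l ^ (d - k) * w ^ k) = 0" if "(l, w) \<in> S" for l w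
  proof -
    from that obtain p where "p \<in> line_points a b 0 \<inter> curve_points F" "\<psi> p = (l, w)"
      by (auto simp: S_def)
    then have "eval3 F (l * x0) (l * y0) w = 0"
      using param by (force simp: curve_points_def)
    then show ?thesis
      by (simp add: eval3_homogeneous3_scale_xy[OF F])
  qed
  have zero: "eval2 (coeff F k) x0 y0 = 0" if "k \<le> d" for k
    using binary_form_coeffs_eq_0[OF S card_S zeros that] .
  have "linear_form2 a b dvd coeff F k" for k
  proof (cases "k \<le> d")
    case True
    show ?thesis
      using \<open>(a, b) \<noteq> (0, 0)\<close>
      by (intro linear_form2_dvd_if_eval2_eq_0[OF homogeneous3_coeff[OF F] zero[OF True]])
        (auto simp: x0_def y0_def)
  next
    case False
    then show ?thesis
      using homogeneous3_coeff_eq_0[OF F] by simp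
  qed
  then show ?thesis
    by (simp add: const_poly_dvd_iff linear_form_def linear_form2_def)
qed

lemma linear_form_dvd_if_card_gt_degree:
  fixes F :: "'a::field poly3"
  assumes "homogeneous3 F d" "(a, b, c) \<noteq> (0, 0, 0)"
    and "d < card (line_points a b c \<inter> curve_points F)"
  shows "linear_form a b c dvd F"
proof (cases "c = 0")
  case True
  then show ?thesis
    using assms linear_form_dvd_if_card_gt_degree_c_zero[OF assms(1)] by auto
next
  case False
  then show ?thesis
    using assms linear_form_dvd_if_card_gt_degree_c_nonzero by blast
qed

lemma card_line_inter_curve_le:
  fixes F :: "'a::field poly3"
  assumes "homogeneous3 F d" "no_Fq_linear_component F" "is_Fq_line l"
  shows "card (l \<inter> curve_points F) \<le> d"
  using assms linear_form_dvd_if_card_gt_degree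
  unfolding is_Fq_line_def no_Fq_linear_component_def by (meson not_le)

lemma card_proj_points1: "card (proj_points1 :: ('a::{finite,field} \<times> 'a) set) = CARD('a) + 1"
proof -
  have "proj_points1 = insert (0, 1) (range (\<lambda>y::'a. (1::'a, y)))"
    unfolding proj_points1_def by auto
  moreover have "card (range (\<lambda>y::'a. (1::'a, y))) = CARD('a)"
    by (simp add: card_image inj_on_def)
  moreover have "(0, 1) \<notin> range (\<lambda>y::'a. (1::'a, y))"
    by auto
  ultimately show ?thesis
    by (metis Suc_eq_plus1 card_insert_disjoint finite)
qed

lemma card_line_points_le:
  fixes a b c :: "'a::{finite,field}"
  assumes "(a, b, c) \<noteq> (0, 0, 0)"
  shows "card (line_points a b c) \<le> CARD('a) + 1"
proof -
  define \<psi> :: "'a \<times> 'a \<times> 'a \<Rightarrow> 'a \<times> 'a"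
    where "\<psi> = (\<lambda>(x, y, z). if c \<noteq> 0 then (x, y) else if b \<noteq> 0 then (x, z) else (y, z))"
  have "inj_on \<psi> (line_points a b c)"
  proof (rule inj_onI)
    fix p p' assume "p \<in> line_points a b c" "p' \<in> line_points a b c" "\<psi> p = \<psi> p'"
    then show "p = p'"
      using assms
      by (cases p; cases p') (auto simp: line_points_def proj_points_def \<psi>_def split: if_splits,
          (metis add_left_cancel mult_cancel_left)+)
  qed
  moreover have "\<psi> ` line_points a b c \<subseteq> proj_points1"
    using assms
    by (auto simp: line_points_def proj_points_def \<psi>_def proj_points1_def split: if_splits)
  ultimately have "card (line_points a b c) \<le> card (proj_points1 :: ('a \<times> 'a) set)"
    by (metis card_image card_mono finite)
  then show ?thesis
    by (simp add: card_proj_points1)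
qed

lemma line_points_scale:
  fixes k :: "'a::field"
  assumes "k \<noteq> 0"
  shows "line_points (k * a) (k * b) (k * c) = line_points a b c"
proof -
  have "k * a * x + k * b * y + k * c * z = k * (a * x + b * y + c * z)" for x y z
    by (simp add: algebra_simps)
  then show ?thesis
    using assms unfolding line_points_def by auto
qed

lemma is_Fq_line_normalized:
  assumes "is_Fq_line l"
  obtains a b c where "(a, b, c) \<in> proj_points" "l = line_points a b c"
proof -
  obtain a b c where abc: "(a, b, c) \<noteq> (0, 0, 0)" "l = line_points a b c"
    using assms unfolding is_Fq_line_def by blast
  define k where "k = (if a \<noteq> 0 then 1 / a else if b \<noteq> 0 then 1 / b else 1 / c)"
  have "k \<noteq> 0" "(k * a, k * b, k * c) \<in> proj_points"
    using abc(1) by (auto simp: k_def proj_points_def)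
  then show ?thesis
    using that abc(2) line_points_scale by metis
qed

lemma mem_line_points_dual:
  "(x, y, z) \<in> proj_points \<Longrightarrow> (a, b, c) \<in> proj_points \<Longrightarrow>
    (x, y, z) \<in> line_points a b c \<longleftrightarrow> (a, b, c) \<in> line_points x y z"
  by (simp add: line_points_def mult.commute)

lemma card_lines_through_le:
  fixes P :: "'a::{finite,field} \<times> 'a \<times> 'a"
  assumes "P \<in> proj_points"
  shows "card {l. is_Fq_line l \<and> P \<in> l} \<le> CARD('a) + 1"
proof -
  obtain x y z where P: "P = (x, y, z)"
    by (cases P)
  \<comment> \<open>by duality, the lines through P are indexed by the points of the line with coefficients P\<close>
  have "{l. is_Fq_line l \<and> P \<in> l} \<subseteq> (\<lambda>(a, b, c). line_points a b c) ` line_points x y z"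
  proof
    fix l assume "l \<in> {l. is_Fq_line l \<and> P \<in> l}"
    then obtain a b c where abc: "(a, b, c) \<in> proj_points" "l = line_points a b c" "P \<in> l"
      by (auto elim: is_Fq_line_normalized)
    then have "(a, b, c) \<in> line_points x y z"
      using assms mem_line_points_dual unfolding P by blast
    then show "l \<in> (\<lambda>(a, b, c). line_points a b c) ` line_points x y z"
      using abc(2) by (auto intro: rev_image_eqI)
  qed
  then have "card {l. is_Fq_line l \<and> P \<in> l} \<le> card (line_points x y z)"
    using card_image_le[of "line_points x y z" "\<lambda>(a, b, c). line_points a b c"]
    by (meson card_mono finite order.trans)
  also have "\<dots> \<le> CARD('a) + 1"
    using assms by (intro card_line_points_le) (auto simp: P proj_points_def)
  finally show ?thesis .
qed

lemma line_through_two_points: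
  assumes "P \<in> proj_points" "Q \<in> proj_points" "P \<noteq> Q"
  shows "\<exists>l. is_Fq_line l \<and> P \<in> l \<and> Q \<in> l"
proof -
  obtain p1 p2 p3 q1 q2 q3 where PQ: "P = (p1, p2, p3)" "Q = (q1, q2, q3)"
    by (cases P; cases Q)
  \<comment> \<open>coefficients: the cross product of P and Q\<close>
  let ?l = "line_points (p2 * q3 - p3 * q2) (p3 * q1 - p1 * q3) (p1 * q2 - p2 * q1)"
  have "(p2 * q3 - p3 * q2, p3 * q1 - p1 * q3, p1 * q2 - p2 * q1) \<noteq> (0, 0, 0)"
    using assms unfolding PQ proj_points_def by (auto simp: algebra_simps)
  then have "is_Fq_line ?l"
    unfolding is_Fq_line_def by blast
  moreover have "P \<in> ?l" "Q \<in> ?l"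
    using assms unfolding PQ line_points_def by (auto simp: algebra_simps)
  ultimately show ?thesis by blast
qed

lemma card_le_by_lines_through:
  fixes C :: "('a::{finite,field} \<times> 'a \<times> 'a) set"
  assumes C: "C \<subseteq> proj_points" "P \<in> C"
    and l: "is_Fq_line l1" "is_Fq_line l2" "l1 \<noteq> l2" "P \<in> l1" "P \<in> l2"
    and bound: "\<And>l. is_Fq_line l \<Longrightarrow> P \<in> l \<Longrightarrow> card (l \<inter> C) \<le> m"
  shows "card C + 1 \<le> card (l1 \<inter> C) + card (l2 \<inter> C) + (CARD('a) - 1) * (m - 1)"
proof -
  define L where "L = {l. is_Fq_line l \<and> P \<in> l}"
  define f where "f l = card (l \<inter> C) - 1" for l
  have "l1 \<in> L" "l2 \<in> L"
    using l by (simp_all add: L_def)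
  have cover: "C - {P} \<subseteq> (\<Union>l\<in>L. l \<inter> C - {P})"
  proof
    fix Q assume Q: "Q \<in> C - {P}"
    then obtain l where "is_Fq_line l" "P \<in> l" "Q \<in> l"
      using line_through_two_points[of P Q] C by auto
    then show "Q \<in> (\<Union>l\<in>L. l \<inter> C - {P})"
      using Q by (auto simp: L_def)
  qed
  have "card C - 1 = card (C - {P})"
    using C(2) by (simp add: card_Diff_singleton)
  also have "\<dots> \<le> card (\<Union>l\<in>L. l \<inter> C - {P})"
    using cover by (intro card_mono) simp_all
  also have "\<dots> \<le> (\<Sum>l\<in>L. card (l \<inter> C - {P}))"
    by (rule card_UN_le) simp
  also have "\<dots> = (\<Sum>l\<in>L. f l)"
    using C(2) by (intro sum.cong) (simp_all add: L_def f_def card_Diff_singleton)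
  also have "\<dots> = (\<Sum>l\<in>L - {l1, l2}. f l) + (\<Sum>l\<in>{l1, l2}. f l)"
    using \<open>l1 \<in> L\<close> \<open>l2 \<in> L\<close> by (intro sum.subset_diff) simp_all
  also have "(\<Sum>l\<in>L - {l1, l2}. f l) \<le> (CARD('a) - 1) * (m - 1)"
  proof -
    have "card L \<le> CARD('a) + 1"
      unfolding L_def using C by (intro card_lines_through_le) auto
    then have "card (L - {l1, l2}) \<le> CARD('a) - 1"
      using \<open>l1 \<in> L\<close> \<open>l2 \<in> L\<close> l(3) by (simp add: card_Diff_subset)
    moreover have "f l \<le> m - 1" if "l \<in> L" for l
      using that bound by (simp add: L_def f_def diff_le_mono)
    ultimately show ?thesis
      using sum_bounded_above[of "L - {l1, l2}" f "m - 1"] mult_le_mono1 order.trans by fastforce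
  qed
  finally have "card C - 1 \<le> (CARD('a) - 1) * (m - 1) + (f l1 + f l2)"
    using l(3) by simp
  moreover have "1 \<le> card C" "1 \<le> card (l1 \<inter> C)" "1 \<le> card (l2 \<inter> C)"
    using C(2) l(4,5) by (auto simp: Suc_le_eq card_gt_0_iff)
  ultimately show ?thesis
    unfolding f_def by linarith
qed

theorem corollary3p5:
  fixes F :: "'a::{finite, field} poly3"
    and l1 l2 :: "('a \<times> 'a \<times> 'a) set"
    and P :: "'a \<times> 'a \<times> 'a"
    and i j :: nat
  assumes "CARD('a) \<ge> 5"
    and "F \<noteq> 0"
    and "homogeneous3 F (CARD('a) - 1)"
    and "no_Fq_linear_component F"
    and "card (curve_points F) = (CARD('a) - 1)^2"
    and "is_Fq_line l1" and "is_Fq_line l2" and "l1 \<noteq> l2"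
    and "card (l1 \<inter> curve_points F) = i"
    and "card (l2 \<inter> curve_points F) = j"
    and "l1 \<inter> l2 = {P}"
    and "P \<in> curve_points F"
  shows "i + j \<ge> CARD('a)"
proof -
  let ?q = "CARD('a)"
  have "curve_points F \<subseteq> proj_points"
    by (auto simp: curve_points_def)
  moreover have "P \<in> l1" "P \<in> l2"
    using assms(11) by auto
  ultimately have "card (curve_points F) + 1 \<le> i + j + (?q - 1) * (?q - 1 - 1)"
    using card_le_by_lines_through[where m = "?q - 1"] card_line_inter_curve_le[OF assms(3,4)]
      assms(6-10,12)
    by blast
  then have "(?q - 1)\<^sup>2 + 1 \<le> i + j + (?q - 1) * (?q - 2)"
    using assms(5) by (simp add: numeral_2_eq_2)
  moreover obtain r where "?q = r + 2"
    using assms(1) le_Suc_ex[of 2 ?q] by (auto simp: add.commute)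
  ultimately show ?thesis
    by (simp add: power2_eq_square algebra_simps)
qed

end
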